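(* Let $\theta_1>0$, let $n,d$ be positive integers, let $\epsilon\in(0,\frac12)$, and define for real $\lambda\ge2$ $$M(\lambda)=\theta_1\,\lambda\log_2(\lambda)\,\left(\log_2(3n2^d/\epsilon)\right)^{\frac{1}{\lambda-1}+1}.$$ Then $M$ has exactly one local minimum on $[2,\infty)$, and it is the global minimum of $M$ on $[2,\infty)$. *)

theory Defs
  imports "HOL-Analysis.Analysis"
begin

definition local_min_on :: "(real \<Rightarrow> real) \<Rightarrow> real set \<Rightarrow> real \<Rightarrow> bool" where
  "local_min_on f S x \<longleftrightarrow> x \<in> S \<and> (\<exists>e>0. \<forall>y\<in>S. dist y x < e \<longrightarrow> f x \<le> f y)"

definition Mfun :: "real \<Rightarrow> nat \<Rightarrow> nat \<Rightarrow> real \<Rightarrow> real \<Rightarrow> real" where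
  "Mfun theta1 n d eps lam = theta1 * lam * log 2 lam *
      (log 2 (3 * real n * 2 ^ d / eps)) powr (1 / (lam - 1) + 1)"

end

theory Submission
  imports Defs
begin

text \<open>Writing \<open>L = log\<^sub>2(3n2\<^sup>d/\<epsilon>)\<close>, the derivative of \<open>M\<close> at \<open>\<lambda> > 1\<close> is a positive factor times
  \<open>q(\<lambda>) - ln L\<close>, where \<open>q(\<lambda>) = (\<lambda>-1)\<^sup>2/\<lambda> \<cdot> (1 + 1/ln \<lambda>)\<close> is continuous, strictly increasing and
  unbounded. So \<open>M'\<close> changes sign exactly once on \<open>[2,\<infinity>)\<close>: \<open>M\<close> strictly decreases up to a point
  \<open>z\<close> and strictly increases after it, hence \<open>z\<close> is the only local minimum and a global one.\<close>

lemma valley_imp_unique_global_local_min_on: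
  fixes F :: "real \<Rightarrow> real"
  assumes "a \<le> z"
    and dec: "\<And>x y. a \<le> x \<Longrightarrow> x < y \<Longrightarrow> y \<le> z \<Longrightarrow> F y < F x"
    and inc: "\<And>x y. z \<le> x \<Longrightarrow> x < y \<Longrightarrow> F x < F y"
  shows "(\<exists>!x. local_min_on F {a..} x) \<and>
         (\<forall>x. local_min_on F {a..} x \<longrightarrow> (\<forall>y\<in>{a..}. F x \<le> F y))"
proof -
  have glob: "F z \<le> F y" if "a \<le> y" for y
    using dec[of y z] inc[of z y] that by (cases y z rule: linorder_cases) auto
  have "local_min_on F {a..} z"
    unfolding local_min_on_def using \<open>a \<le> z\<close> glob by (auto intro: exI[of _ 1])
  moreover have "x = z" if "local_min_on F {a..} x" for x
  proof (rule ccontr)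
    assume "x \<noteq> z"
    from that obtain e where "e > 0" "a \<le> x" and near: "\<And>y. a \<le> y \<Longrightarrow> dist y x < e \<Longrightarrow> F x \<le> F y"
      unfolding local_min_on_def by auto
    show False
    proof (cases "x < z")
      case True
      define y where "y = min (x + e/2) z"
      have "a \<le> y" "dist y x < e" "x < y" "y \<le> z"
        using True \<open>e > 0\<close> \<open>a \<le> x\<close> by (auto simp: y_def dist_real_def)
      then show False using near dec[of x y] \<open>a \<le> x\<close> by fastforce
    next
      case False
      define y where "y = max (x - e/2) z"
      have "a \<le> y" "dist y x < e" "y < x" "z \<le> y"
        using False \<open>x \<noteq> z\<close> \<open>e > 0\<close> \<open>a \<le> z\<close> by (auto simp: y_def dist_real_def)
      then show False using near inc[of y x] by fastforce
    qed
  qed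
  ultimately show ?thesis using glob by blast
qed

lemma derivative_sign_change_imp_unique_global_local_min_on:
  fixes F F' :: "real \<Rightarrow> real"
  assumes "a \<le> z"
    and deriv: "\<And>x. a \<le> x \<Longrightarrow> (F has_real_derivative F' x) (at x)"
    and neg: "\<And>x. a \<le> x \<Longrightarrow> x < z \<Longrightarrow> F' x < 0"
    and pos: "\<And>x. z < x \<Longrightarrow> F' x > 0"
  shows "(\<exists>!x. local_min_on F {a..} x) \<and>
         (\<forall>x. local_min_on F {a..} x \<longrightarrow> (\<forall>y\<in>{a..}. F x \<le> F y))"
proof (rule valley_imp_unique_global_local_min_on[OF \<open>a \<le> z\<close>])
  have cont: "continuous_on {x..y} F" if "a \<le> x" for x y
    using DERIV_isCont[OF deriv] that by (auto intro!: continuous_at_imp_continuous_on)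
  show "F y < F x" if "a \<le> x" "x < y" "y \<le> z" for x y
  proof (rule DERIV_neg_imp_decreasing_open[OF \<open>x < y\<close> _ cont[OF \<open>a \<le> x\<close>]])
    fix t assume "x < t" "t < y"
    then show "\<exists>r. (F has_real_derivative r) (at t) \<and> r < 0"
      using that deriv[of t] neg[of t] by auto
  qed
  show "F x < F y" if "z \<le> x" "x < y" for x y
  proof (rule DERIV_pos_imp_increasing_open[OF \<open>x < y\<close> _ cont])
    fix t assume "x < t" "t < y"
    then show "\<exists>r. (F has_real_derivative r) (at t) \<and> 0 < r"
      using that \<open>a \<le> z\<close> deriv[of t] pos[of t] by auto
  qed (use that \<open>a \<le> z\<close> in auto)
qed

lemma strict_mono_on_crossing_point:
  fixes f :: "real \<Rightarrow> real"
  assumes cont: "continuous_on {a..} f"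
    and mono: "\<And>x y. a \<le> x \<Longrightarrow> x < y \<Longrightarrow> f x < f y"
    and "a \<le> b" "c < f b"
  obtains z where "a \<le> z" "\<And>y. a \<le> y \<Longrightarrow> y < z \<Longrightarrow> f y < c" "\<And>y. z < y \<Longrightarrow> c < f y"
proof (cases "c \<le> f a")
  case True
  then show ?thesis using mono by (intro that[of a]) force+
next
  case False
  have "continuous_on {a..b} f"
    using cont by (rule continuous_on_subset) auto
  then obtain z where "a \<le> z" "z \<le> b" "f z = c"
    using IVT'[of f a c b] False \<open>c < f b\<close> \<open>a \<le> b\<close> by auto
  then show ?thesis using mono by (intro that[of z]) force+
qed

definition critical_level :: "real \<Rightarrow> real" where
  "critical_level x = (x - 1)\<^sup>2 / x * (1 + 1 / ln x)"

lemma critical_level_split: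
  "1 < x \<Longrightarrow> critical_level x = (x - 1)\<^sup>2 / x + (x - 1)\<^sup>2 / (x * ln x)"
  unfolding critical_level_def by (simp add: field_simps)

lemma strict_mono_sq_diff_one_div:
  fixes a b :: real
  assumes "1 \<le> a" "a < b"
  shows "(a - 1)\<^sup>2 / a < (b - 1)\<^sup>2 / b"
proof -
  have "1 < a * b"
    using assms mult_right_mono[of 1 a b] by linarith
  then have "0 < (b - a) * (a * b - 1) / (a * b)"
    using assms by simp
  moreover have "(b - 1)\<^sup>2 / b - (a - 1)\<^sup>2 / a = (b - a) * (a * b - 1) / (a * b)"
    using assms by (simp add: field_simps power2_eq_square)
  ultimately show ?thesis by linarith
qed

lemma mono_diff_one_div_ln:
  fixes a b :: real
  assumes "1 < a" "a \<le> b"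
  shows "(a - 1) / ln a \<le> (b - 1) / ln b"
proof (rule DERIV_nonneg_imp_nondecreasing[OF \<open>a \<le> b\<close>])
  fix x assume "a \<le> x" "x \<le> b"
  then have "1 < x" using assms by simp
  have "((\<lambda>x. (x - 1) / ln x) has_real_derivative (ln x - (1 - 1/x)) / (ln x)\<^sup>2) (at x)"
    using \<open>1 < x\<close> by (auto intro!: derivative_eq_intros simp: power2_eq_square field_simps)
  moreover have "1 - 1/x \<le> ln x"
    using ln_le_minus_one[of "1/x"] \<open>1 < x\<close> by (simp add: ln_div)
  ultimately show "\<exists>y. ((\<lambda>x. (x - 1) / ln x) has_real_derivative y) (at x) \<and> 0 \<le> y"
    by auto
qed

lemma mono_sq_diff_one_div_mult_ln:
  fixes a b :: real
  assumes "1 < a" "a \<le> b"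
  shows "(a - 1)\<^sup>2 / (a * ln a) \<le> (b - 1)\<^sup>2 / (b * ln b)"
proof -
  have factor: "(x - 1)\<^sup>2 / (x * ln x) = (1 - 1/x) * ((x - 1) / ln x)" if "1 < x" for x :: real
    using that by (simp add: field_simps power2_eq_square)
  have "(1 - 1/a) * ((a - 1) / ln a) \<le> (1 - 1/b) * ((b - 1) / ln b)"
    using assms mono_diff_one_div_ln[OF assms] by (intro mult_mono) (auto simp: frac_le)
  then show ?thesis using factor assms by simp
qed

lemma critical_level_strict_mono: "1 < a \<Longrightarrow> a < b \<Longrightarrow> critical_level a < critical_level b"
  using strict_mono_sq_diff_one_div[of a b] mono_sq_diff_one_div_mult_ln[of a b]
    critical_level_split[of a] critical_level_split[of b] by simp

lemma critical_level_gt: "1 < x \<Longrightarrow> x - 2 < critical_level x"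
proof -
  assume "1 < x"
  have "x * (x - 2) < (x - 1)\<^sup>2"
    by (simp add: power2_eq_square algebra_simps)
  then have "x - 2 < (x - 1)\<^sup>2 / x" "0 \<le> (x - 1)\<^sup>2 / (x * ln x)"
    using \<open>1 < x\<close> by (simp_all add: field_simps)
  then show ?thesis using critical_level_split[OF \<open>1 < x\<close>] by simp
qed

lemma continuous_on_critical_level: "continuous_on {1<..} critical_level"
  unfolding critical_level_def by (intro continuous_intros) auto

lemma critical_level_crossing_point:
  obtains z where "2 \<le> z" "\<And>y. 2 \<le> y \<Longrightarrow> y < z \<Longrightarrow> critical_level y < c"
    "\<And>y. z < y \<Longrightarrow> c < critical_level y"
proof -
  define b where "b = \<bar>c\<bar> + 3"
  have "b - 2 < critical_level b"
    by (rule critical_level_gt) (simp add: b_def)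
  then have "c < critical_level b"
    using abs_ge_self[of c] by (simp add: b_def)
  moreover have "2 \<le> b" by (simp add: b_def)
  moreover have "continuous_on {2..} critical_level"
    by (rule continuous_on_subset[OF continuous_on_critical_level]) auto
  moreover have "critical_level x < critical_level y" if "2 \<le> x" "x < y" for x y
    using that by (intro critical_level_strict_mono) auto
  ultimately show ?thesis
    using strict_mono_on_crossing_point that by blast
qed

lemma has_real_derivative_Mfun_shape:
  fixes t L x :: real
  assumes "0 < L" "1 < x"
  shows "((\<lambda>lam. t * lam * log 2 lam * L powr (1 / (lam - 1) + 1)) has_real_derivative
      t * L powr (1 / (x - 1) + 1) / ln 2 * (x * ln x / (x - 1)\<^sup>2) * (critical_level x - ln L)) (at x)"
proof -
  have "x - 1 \<noteq> 0" "ln x \<noteq> 0" using assms by auto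
  have den: "ln 2 + x * (x * ln 2) - x * (2 * ln 2) = ln 2 * (x - 1)\<^sup>2"
    by (simp add: power2_eq_square algebra_simps)
  have "((\<lambda>lam. t * lam * (ln lam / ln 2) * exp ((1 / (lam - 1) + 1) * ln L)) has_real_derivative
      t * exp ((1 / (x - 1) + 1) * ln L) / ln 2 * (ln x + 1 - x * ln x * ln L / (x - 1)\<^sup>2)) (at x)"
    apply (rule derivative_eq_intros refl | use assms in simp; fail)+
    using assms
    by (simp add: field_simps) (simp only: den, simp add: field_simps)
  moreover have "ln x + 1 - x * ln x * ln L / (x - 1)\<^sup>2 = x * ln x / (x - 1)\<^sup>2 * (critical_level x - ln L)"
    using \<open>x - 1 \<noteq> 0\<close> \<open>ln x \<noteq> 0\<close> assms unfolding critical_level_def by (simp add: field_simps)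
  ultimately show ?thesis using assms by (simp add: powr_def log_def ac_simps)
qed

theorem mainTheorem9:
  fixes theta1 eps :: real and n d :: nat
  assumes "theta1 > 0" and "n > 0" and "d > 0" and "0 < eps" and "eps < 1/2"
  shows "(\<exists>!x. local_min_on (Mfun theta1 n d eps) {2..} x) \<and>
         (\<forall>x. local_min_on (Mfun theta1 n d eps) {2..} x \<longrightarrow>
              (\<forall>y\<in>{2..}. Mfun theta1 n d eps x \<le> Mfun theta1 n d eps y))"
proof -
  define L where "L = log 2 (3 * real n * 2 ^ d / eps)"
  have "3 \<le> 3 * real n * 2 ^ d"
    using \<open>n > 0\<close> mult_mono[of 1 "real n" 1 "2 ^ d :: real"] by simp
  then have "0 < L"
    using \<open>0 < eps\<close> \<open>eps < 1/2\<close> by (simp add: L_def field_simps)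
  obtain z where "2 \<le> z"
    and below: "\<And>y. 2 \<le> y \<Longrightarrow> y < z \<Longrightarrow> critical_level y < ln L"
    and above: "\<And>y. z < y \<Longrightarrow> ln L < critical_level y"
    using critical_level_crossing_point[of "ln L"] by blast
  let ?M = "\<lambda>lam. theta1 * lam * log 2 lam * L powr (1 / (lam - 1) + 1)"
  let ?M' = "\<lambda>x. theta1 * L powr (1 / (x - 1) + 1) / ln 2 * (x * ln x / (x - 1)\<^sup>2) * (critical_level x - ln L)"
  have "(\<exists>!x. local_min_on ?M {2..} x) \<and> (\<forall>x. local_min_on ?M {2..} x \<longrightarrow> (\<forall>y\<in>{2..}. ?M x \<le> ?M y))"
  proof (rule derivative_sign_change_imp_unique_global_local_min_on[of 2 z ?M ?M'])
    have factor_pos: "0 < theta1 * L powr (1 / (x - 1) + 1) / ln 2 * (x * ln x / (x - 1)\<^sup>2)"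
      if "1 < x" for x
      using that \<open>0 < theta1\<close> \<open>0 < L\<close> by simp
    show "?M' x < 0" if "2 \<le> x" "x < z" for x
      using below[OF that] that by (intro mult_pos_neg factor_pos) auto
    show "0 < ?M' x" if "z < x" for x
      using above[OF that] that \<open>2 \<le> z\<close> by (intro mult_pos_pos factor_pos) auto
    show "(?M has_real_derivative ?M' x) (at x)" if "2 \<le> x" for x
      using that by (intro has_real_derivative_Mfun_shape \<open>0 < L\<close>) simp
  qed fact
  moreover have "Mfun theta1 n d eps = ?M"
    by (simp add: Mfun_def L_def fun_eq_iff)
  ultimately show ?thesis by simp
qed

end
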